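(* Let $(A_C,\mathcal R_A)$ be an autocatalytic core of a CRN and let $\overline{\mathbb S}_C=(\mathbb S)_{A_C}^{\mathcal R_A}$ (a square invertible matrix). Then every column of $\overline{\mathbb S}_C^{-1}$ is semi-positive, i.e. $\overline{\mathbb S}_C^{-1}$ has only nonnegative entries and no zero column.
   Context: A chemical reaction network (CRN) consists of a finite species set $\mathcal S$ and a finite set $\mathcal R$ of reactions; each reaction $r$ is written $r^-\to r^+$ with input complex $r^-\in\mathbb Z_{\ge0}^{\mathcal S}$ and output complex $r^+\in\mathbb Z_{\ge0}^{\mathcal S}$. The input and output matrices $\mathbb S^-,\mathbb S^+$ are the $\mathcal S\times\mathcal R$ matrices whose column indexed by $r$ is $r^-$, resp. $r^+$; the stoichiometric matrix is $\mathbb S=\mathbb S^+-\mathbb S^-$. For a matrix $\mathbb A$ with rows indexed by $\mathcal S$ and columns by $\mathcal R$ and subsets $M\subseteq\mathcal S$, $N\subseteq\mathcal R$, $(\mathbb A)_M^N$ is the submatrix with rows in $M$ and columns in $N$. For a vector $\mathbf v$: $\mathbf v\gg\mathbf 0$ means all entries are $>0$; $\mathbf v>\mathbf 0$ (semi-positive) means all entries are $\ge0$ and $\mathbf v\ne\mathbf 0$. A motif is a pair $(\mathcal M,\mathcal R')$ with $\mathcal M\subseteq\mathcal S$, $\mathcal R'\subseteq\mathcal R$. It is exclusively autocatalytic if: (i) there is $\mathbf v\in\mathbb R^{\mathcal R'}$, $\mathbf v\gg\mathbf0$, with $(\mathbb S)_{\mathcal M}^{\mathcal R'}\mathbf v\gg\mathbf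 0$; (ii) every row of $(\mathbb S^-)_{\mathcal M}^{\mathcal R'}$ is semi-positive; (iii) every column of $(\mathbb S^-)_{\mathcal M}^{\mathcal R'}$ is semi-positive. An autocatalytic core is an exclusively autocatalytic motif $(A_C,\mathcal R_A)$ such that no motif $(\mathcal M',\mathcal R'')\neq(A_C,\mathcal R_A)$ with $\mathcal M'\subseteq A_C$ and $\mathcal R''\subseteq\mathcal R_A$ is exclusively autocatalytic. *)

theory Defs
  imports Complex_Main
begin

text \<open>A CRN is given by a finite species set Spc, a finite reaction set Rxn, and the
input / output matrices Sin, Sout (column r is the input / output complex of r),
with nonnegative integer entries.\<close>

definition stoich :: "('s \<Rightarrow> 'r \<Rightarrow> nat) \<Rightarrow> ('s \<Rightarrow> 'r \<Rightarrow> nat) \<Rightarrow> 's \<Rightarrow> 'r \<Rightarrow> real" where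
  "stoich Sin Sout s r = real (Sout s r) - real (Sin s r)"

text \<open>Exclusively autocatalytic motif (M, R') of the CRN; M is required nonempty
(otherwise the empty motif would trivially qualify and no core could exist).\<close>

definition excl_autocatalytic ::
  "'s set \<Rightarrow> 'r set \<Rightarrow> ('s \<Rightarrow> 'r \<Rightarrow> nat) \<Rightarrow> ('s \<Rightarrow> 'r \<Rightarrow> nat) \<Rightarrow> 's set \<Rightarrow> 'r set \<Rightarrow> bool" where
  "excl_autocatalytic Spc Rxn Sin Sout M R' \<longleftrightarrow>
     M \<subseteq> Spc \<and> R' \<subseteq> Rxn \<and> M \<noteq> {} \<and>
     (\<exists>v :: 'r \<Rightarrow> real. (\<forall>r\<in>R'. v r > 0) \<and>
        (\<forall>s\<in>M. (\<Sum>r\<in>R'. stoich Sin Sout s r * v r) > 0)) \<and>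
     (\<forall>s\<in>M. \<exists>r\<in>R'. Sin s r > 0) \<and>
     (\<forall>r\<in>R'. \<exists>s\<in>M. Sin s r > 0)"

definition autocatalytic_core ::
  "'s set \<Rightarrow> 'r set \<Rightarrow> ('s \<Rightarrow> 'r \<Rightarrow> nat) \<Rightarrow> ('s \<Rightarrow> 'r \<Rightarrow> nat) \<Rightarrow> 's set \<Rightarrow> 'r set \<Rightarrow> bool" where
  "autocatalytic_core Spc Rxn Sin Sout AC RA \<longleftrightarrow>
     excl_autocatalytic Spc Rxn Sin Sout AC RA \<and>
     (\<forall>M' R''. M' \<subseteq> AC \<longrightarrow> R'' \<subseteq> RA \<longrightarrow> (M', R'') \<noteq> (AC, RA) \<longrightarrow>
        \<not> excl_autocatalytic Spc Rxn Sin Sout M' R'')"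

definition is_inverse_on ::
  "'s set \<Rightarrow> 'r set \<Rightarrow> ('s \<Rightarrow> 'r \<Rightarrow> real) \<Rightarrow> ('r \<Rightarrow> 's \<Rightarrow> real) \<Rightarrow> bool" where
  "is_inverse_on M R A B \<longleftrightarrow>
     (\<forall>s\<in>M. \<forall>s'\<in>M. (\<Sum>r\<in>R. A s r * B r s') = (if s = s' then 1 else 0)) \<and>
     (\<forall>r\<in>R. \<forall>r'\<in>R. (\<Sum>s\<in>M. B r s * A s r') = (if r = r' then 1 else 0))"

end

theory Submission
  imports Defs "Jordan_Normal_Form.Determinant"
begin

text \<open>By minimality of the core, every nonnegative flux on the core reactions that produces
all core species must have full support: its support, together with the core species
consumed there, would otherwise be a smaller exclusively autocatalytic motif. Now let
\<open>v \<gg> 0\<close> be a productive flux and suppose \<open>S d \<ge> 0\<close> on the core species while \<open>d\<close> has a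
negative entry. Moving from \<open>v\<close> along \<open>d\<close> until the first coordinate vanishes yields a
productive nonnegative flux with a zero entry, which is impossible. Hence \<open>S d \<ge> 0\<close>
implies \<open>d \<ge> 0\<close>; in particular the core stoichiometric matrix has trivial kernel.
Minimality also gives every core species a reaction consuming no other core species, so
there are at least as many core reactions as core species; the matrix is therefore square
and invertible, and each column of its inverse solves \<open>S d = e\<^sub>s \<ge> 0\<close>.\<close>

lemma wide_mat_trivial_kernel_imp_invertible:
  fixes A :: "'a :: field mat"
  assumes A: "A \<in> carrier_mat n m" and "n \<le> m"
    and ker: "\<And>v. v \<in> carrier_vec m \<Longrightarrow> A *\<^sub>v v = 0\<^sub>v n \<Longrightarrow> v = 0\<^sub>v m"
  shows "n = m \<and> (\<exists>B \<in> carrier_mat m m. B * A = 1\<^sub>m m \<and> A * B = 1\<^sub>m m)"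
proof -
  \<comment> \<open>pad \<open>A\<close> with zero rows to a square matrix with the same kernel\<close>
  define P where "P = mat m m (\<lambda>(i, j). if i < n then A $$ (i, j) else 0)"
  have P: "P \<in> carrier_mat m m" by (simp add: P_def)
  have row_P: "row P i = (if i < n then row A i else 0\<^sub>v m)" if "i < m" for i
    using that A by (auto simp: P_def)
  have det_P: "det P \<noteq> 0"
  proof
    assume "det P = 0"
    then obtain v where v: "v \<in> carrier_vec m" "v \<noteq> 0\<^sub>v m" "P *\<^sub>v v = 0\<^sub>v m"
      using det_0_iff_vec_prod_zero_field[OF P] by blast
    have "A *\<^sub>v v = 0\<^sub>v n"
    proof (rule eq_vecI)
      fix i assume "i < dim_vec (0\<^sub>v n :: 'a vec)"
      then have "i < n" "i < m" using \<open>n \<le> m\<close> by auto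
      then have "(A *\<^sub>v v) $ i = (P *\<^sub>v v) $ i"
        using A P row_P by simp
      then show "(A *\<^sub>v v) $ i = 0\<^sub>v n $ i" using v(3) \<open>i < n\<close> \<open>i < m\<close> by simp
    qed (use A in simp)
    then show False using ker v by blast
  qed
  have "n = m"
  proof (rule ccontr)
    assume "n \<noteq> m"
    then have "P = mat\<^sub>r m m (\<lambda>i. if i = m - 1 then 0\<^sub>v m else row P i)"
      using \<open>n \<le> m\<close> A by (intro eq_matI) (auto simp: P_def)
    then have "det P = 0"
      using det_row_0[of "m - 1" m "row P"] \<open>n \<le> m\<close> \<open>n \<noteq> m\<close> P by auto
    then show False using det_P by simp
  qed
  moreover have "P = A" using A \<open>n = m\<close> by (intro eq_matI) (auto simp: P_def)
  ultimately show ?thesis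
    using det_non_zero_imp_unit[OF P det_P, of "()"] by (auto simp: Units_def ring_mat_def)
qed

lemma is_inverse_on_exists_if_trivial_kernel:
  fixes A :: "'s \<Rightarrow> 'r \<Rightarrow> real"
  assumes "finite M" "finite R" and card: "card M \<le> card R"
    and ker: "\<And>d. \<forall>s\<in>M. (\<Sum>r\<in>R. A s r * d r) = 0 \<Longrightarrow> \<forall>r\<in>R. d r = 0"
  shows "card M = card R \<and> (\<exists>B. is_inverse_on M R A B)"
proof -
  define n m where "n = card M" and "m = card R"
  obtain fs fr where fs: "bij_betw fs {0..<n} M" and fr: "bij_betw fr {0..<m} R"
    using ex_bij_betw_nat_finite \<open>finite M\<close> \<open>finite R\<close> unfolding n_def m_def by metis
  define gs gr where "gs = inv_into {0..<n} fs" and "gr = inv_into {0..<m} fr"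
  have gs: "gs s < n" "fs (gs s) = s" if "s \<in> M" for s
    using that fs bij_betw_inv_into[OF fs] bij_betw_inv_into_right[OF fs]
    unfolding gs_def by (auto simp: bij_betw_def)
  have gr: "gr r < m" "fr (gr r) = r" if "r \<in> R" for r
    using that fr bij_betw_inv_into[OF fr] bij_betw_inv_into_right[OF fr]
    unfolding gr_def by (auto simp: bij_betw_def)
  have fs': "fs i \<in> M" "gs (fs i) = i" if "i < n" for i
    using that fs bij_betw_inv_into_left[OF fs] unfolding gs_def by (auto simp: bij_betw_def)
  have fr': "fr j \<in> R" "gr (fr j) = j" if "j < m" for j
    using that fr bij_betw_inv_into_left[OF fr] unfolding gr_def by (auto simp: bij_betw_def)
  have sum_M: "(\<Sum>s\<in>M. h s) = (\<Sum>i<n. h (fs i))" for h :: "'s \<Rightarrow> real"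
    using sum.reindex_bij_betw[OF fs, of h] by (simp add: atLeast0LessThan)
  have sum_R: "(\<Sum>r\<in>R. h r) = (\<Sum>j<m. h (fr j))" for h :: "'r \<Rightarrow> real"
    using sum.reindex_bij_betw[OF fr, of h] by (simp add: atLeast0LessThan)
  define Am where "Am = mat n m (\<lambda>(i, j). A (fs i) (fr j))"
  have Am: "Am \<in> carrier_mat n m" by (simp add: Am_def)
  have "v = 0\<^sub>v m" if v: "v \<in> carrier_vec m" "Am *\<^sub>v v = 0\<^sub>v n" for v
  proof -
    have "(\<Sum>r\<in>R. A s r * v $ gr r) = (Am *\<^sub>v v) $ gs s" if "s \<in> M" for s
      using that v(1) gs fr' by (simp add: Am_def sum_R scalar_prod_def atLeast0LessThan)
    then have "\<forall>r\<in>R. v $ gr r = 0" using v(2) gs by (intro ker) simp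
    then show ?thesis using v(1) fr' by (intro eq_vecI) (auto, metis)
  qed
  then obtain B where nm: "n = m" and B: "B \<in> carrier_mat m m" "B * Am = 1\<^sub>m m" "Am * B = 1\<^sub>m m"
    using wide_mat_trivial_kernel_imp_invertible[OF Am card[folded n_def m_def]] by blast
  have "is_inverse_on M R A (\<lambda>r s. B $$ (gr r, gs s))"
    unfolding is_inverse_on_def
  proof (intro conjI ballI)
    fix s s' assume "s \<in> M" "s' \<in> M"
    then have "(\<Sum>r\<in>R. A s r * B $$ (gr r, gs s')) = (Am * B) $$ (gs s, gs s')"
      using gs fr' nm Am B(1) by (simp add: Am_def sum_R scalar_prod_def atLeast0LessThan)
    then show "(\<Sum>r\<in>R. A s r * B $$ (gr r, gs s')) = (if s = s' then 1 else 0)"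
      using B(3) gs \<open>s \<in> M\<close> \<open>s' \<in> M\<close> nm by (simp, metis)
  next
    fix r r' assume "r \<in> R" "r' \<in> R"
    then have "(\<Sum>s\<in>M. B $$ (gr r, gs s) * A s r') = (B * Am) $$ (gr r, gr r')"
      using gr fs' nm Am B(1) by (simp add: Am_def sum_M scalar_prod_def atLeast0LessThan)
    then show "(\<Sum>s\<in>M. B $$ (gr r, gs s) * A s r') = (if r = r' then 1 else 0)"
      using B(2) gr \<open>r \<in> R\<close> \<open>r' \<in> R\<close> by (simp, metis)
  qed
  then show ?thesis using nm unfolding n_def m_def by blast
qed

lemma autocatalytic_coreE:
  assumes "autocatalytic_core Spc Rxn Sin Sout AC RA"
  obtains v where "AC \<subseteq> Spc" "RA \<subseteq> Rxn" "AC \<noteq> {}"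
    and "\<forall>r\<in>RA. 0 < v r" and "\<forall>s\<in>AC. 0 < (\<Sum>r\<in>RA. stoich Sin Sout s r * v r)"
    and "\<forall>s\<in>AC. \<exists>r\<in>RA. 0 < Sin s r" and "\<forall>r\<in>RA. \<exists>s\<in>AC. 0 < Sin s r"
  using assms unfolding autocatalytic_core_def excl_autocatalytic_def by (elim conjE exE) simp

lemma autocatalytic_core_minimal:
  assumes "autocatalytic_core Spc Rxn Sin Sout AC RA"
    and "M \<subseteq> AC" "R \<subseteq> RA" "excl_autocatalytic Spc Rxn Sin Sout M R"
  shows "M = AC \<and> R = RA"
  using assms unfolding autocatalytic_core_def by blast

lemma core_productive_flux_pos:
  assumes core: "autocatalytic_core Spc Rxn Sin Sout AC RA" and "finite RA"
    and nonneg: "\<forall>r\<in>RA. 0 \<le> w r"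
    and productive: "\<forall>s\<in>AC. 0 < (\<Sum>r\<in>RA. stoich Sin Sout s r * w r)"
  shows "\<forall>r\<in>RA. 0 < w r"
proof -
  obtain sub: "AC \<subseteq> Spc" "RA \<subseteq> Rxn" "AC \<noteq> {}"
    and consumed: "\<forall>r\<in>RA. \<exists>s\<in>AC. 0 < Sin s r"
    using core by (rule autocatalytic_coreE)
  define R' where "R' = {r\<in>RA. 0 < w r}"
  define M' where "M' = {s\<in>AC. \<exists>r\<in>R'. 0 < Sin s r}"
  have sum_R': "(\<Sum>r\<in>R'. stoich Sin Sout s r * w r) = (\<Sum>r\<in>RA. stoich Sin Sout s r * w r)" for s
    using \<open>finite RA\<close> nonneg by (intro sum.mono_neutral_left) (force simp: R'_def)+
  have "R' \<noteq> {}" using sub(3) productive sum_R' by fastforce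
  then have "M' \<noteq> {}" using consumed unfolding M'_def R'_def by fastforce
  moreover have "\<forall>r\<in>R'. \<exists>s\<in>M'. 0 < Sin s r"
    using consumed unfolding M'_def R'_def by blast
  ultimately have "excl_autocatalytic Spc Rxn Sin Sout M' R'"
    unfolding excl_autocatalytic_def using sub productive sum_R'
    by (intro conjI exI[of _ w]) (auto simp: M'_def R'_def)
  moreover have "M' \<subseteq> AC" "R' \<subseteq> RA" unfolding M'_def R'_def by auto
  ultimately have "R' = RA" using autocatalytic_core_minimal[OF core] by blast
  then show ?thesis unfolding R'_def by auto
qed

lemma core_stoich_nonneg_imp_nonneg:
  assumes core: "autocatalytic_core Spc Rxn Sin Sout AC RA" and "finite RA"
    and nonneg: "\<forall>s\<in>AC. 0 \<le> (\<Sum>r\<in>RA. stoich Sin Sout s r * d r)"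
  shows "\<forall>r\<in>RA. 0 \<le> d r"
proof (rule ccontr)
  obtain v where v_pos: "\<forall>r\<in>RA. 0 < v r"
    and productive: "\<forall>s\<in>AC. 0 < (\<Sum>r\<in>RA. stoich Sin Sout s r * v r)"
    using core by (rule autocatalytic_coreE)
  define N where "N = {r\<in>RA. d r < 0}"
  assume "\<not> (\<forall>r\<in>RA. 0 \<le> d r)"
  then have N: "finite N" "N \<noteq> {}" using \<open>finite RA\<close> unfolding N_def by auto
  \<comment> \<open>the largest step along \<open>d\<close> from \<open>v\<close> that keeps every coordinate nonnegative\<close>
  define t where "t = Min ((\<lambda>r. v r / - d r) ` N)"
  have "t \<in> (\<lambda>r. v r / - d r) ` N" using N unfolding t_def by (intro Min_in) auto
  then obtain r0 where r0: "r0 \<in> N" "t = v r0 / - d r0" by blast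
  have t_le: "t \<le> v r / - d r" if "r \<in> N" for r
    using N that unfolding t_def by simp
  have "0 < t" using r0 v_pos unfolding N_def by (auto simp: divide_pos_neg)
  define u where "u r = v r + t * d r" for r
  have "0 \<le> u r" if "r \<in> RA" for r
  proof (cases "d r < 0")
    case True
    moreover have "t \<le> v r / - d r" using True that by (intro t_le) (simp add: N_def)
    ultimately have "t * - d r \<le> v r" by (simp only: pos_le_divide_eq neg_0_less_iff_less)
    then show ?thesis by (simp add: u_def)
  next
    case False
    then have "0 \<le> t * d r" using \<open>0 < t\<close> by simp
    then show ?thesis using v_pos that unfolding u_def by (metis add_nonneg_nonneg less_imp_le)
  qed
  moreover have "0 < (\<Sum>r\<in>RA. stoich Sin Sout s r * u r)" if "s \<in> AC" for s
  proof -
    have "(\<Sum>r\<in>RA. stoich Sin Sout s r * u r)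
        = (\<Sum>r\<in>RA. stoich Sin Sout s r * v r) + t * (\<Sum>r\<in>RA. stoich Sin Sout s r * d r)"
      by (simp add: u_def algebra_simps sum.distrib sum_distrib_left)
    then show ?thesis
      using productive nonneg that \<open>0 < t\<close> by (simp add: add_pos_nonneg)
  qed
  ultimately have "0 < u r0"
    using core_productive_flux_pos[OF core \<open>finite RA\<close>, of u] r0 unfolding N_def by blast
  then show False using r0 unfolding u_def N_def by simp
qed

lemma core_stoich_kernel_trivial:
  assumes core: "autocatalytic_core Spc Rxn Sin Sout AC RA" and "finite RA"
    and "\<forall>s\<in>AC. (\<Sum>r\<in>RA. stoich Sin Sout s r * d r) = 0"
  shows "\<forall>r\<in>RA. d r = 0"
proof -
  have "\<forall>r\<in>RA. 0 \<le> d r" "\<forall>r\<in>RA. 0 \<le> - d r"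
    using core_stoich_nonneg_imp_nonneg[OF core \<open>finite RA\<close>, of d]
      core_stoich_nonneg_imp_nonneg[OF core \<open>finite RA\<close>, of "\<lambda>r. - d r"] assms(3)
    by (simp_all add: sum_negf)
  then show ?thesis by force
qed

lemma core_species_private_reaction:
  assumes core: "autocatalytic_core Spc Rxn Sin Sout AC RA" and "s \<in> AC"
  shows "\<exists>r\<in>RA. 0 < Sin s r \<and> (\<forall>s'\<in>AC. s' \<noteq> s \<longrightarrow> Sin s' r = 0)"
proof -
  obtain v where sub: "AC \<subseteq> Spc" "RA \<subseteq> Rxn"
    and v: "\<forall>r\<in>RA. 0 < v r" "\<forall>s\<in>AC. 0 < (\<Sum>r\<in>RA. stoich Sin Sout s r * v r)"
    and consuming: "\<forall>s\<in>AC. \<exists>r\<in>RA. 0 < Sin s r"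
    and consumed: "\<forall>r\<in>RA. \<exists>s\<in>AC. 0 < Sin s r"
    using core by (rule autocatalytic_coreE)
  have "\<exists>r\<in>RA. \<forall>s'\<in>AC - {s}. Sin s' r = 0"
  proof (cases "AC - {s} = {}")
    case True
    then show ?thesis using consuming \<open>s \<in> AC\<close> by blast
  next
    case False
    have "\<not> excl_autocatalytic Spc Rxn Sin Sout (AC - {s}) RA"
      using autocatalytic_core_minimal[OF core, of "AC - {s}" RA] \<open>s \<in> AC\<close> by blast
    \<comment> \<open>removing \<open>s\<close> from the core preserves every condition except (iii)\<close>
    moreover have "excl_autocatalytic Spc Rxn Sin Sout (AC - {s}) RA"
      if all: "\<forall>r\<in>RA. \<exists>s'\<in>AC - {s}. 0 < Sin s' r"
      unfolding excl_autocatalytic_def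
    proof (intro conjI)
      show "AC - {s} \<subseteq> Spc" using sub(1) by blast
      show "\<exists>v. (\<forall>r\<in>RA. 0 < v r) \<and>
          (\<forall>s'\<in>AC - {s}. 0 < (\<Sum>r\<in>RA. stoich Sin Sout s' r * v r))"
        using v by blast
      show "\<forall>s'\<in>AC - {s}. \<exists>r\<in>RA. 0 < Sin s' r" using consuming by blast
    qed (use sub(2) False all in auto)
    ultimately have "\<not> (\<forall>r\<in>RA. \<exists>s'\<in>AC - {s}. 0 < Sin s' r)" by blast
    then show ?thesis by auto
  qed
  then obtain r where r: "r \<in> RA" "\<forall>s'\<in>AC - {s}. Sin s' r = 0" by blast
  moreover obtain s' where "s' \<in> AC" "0 < Sin s' r" using consumed r(1) by blast
  ultimately show ?thesis by (cases "s' = s") auto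
qed

lemma core_card_species_le_reactions:
  assumes core: "autocatalytic_core Spc Rxn Sin Sout AC RA" and "finite RA"
  shows "card AC \<le> card RA"
proof -
  obtain f where f: "\<And>s. s \<in> AC \<Longrightarrow>
      f s \<in> RA \<and> 0 < Sin s (f s) \<and> (\<forall>s'\<in>AC. s' \<noteq> s \<longrightarrow> Sin s' (f s) = 0)"
    using core_species_private_reaction[OF core] by metis
  then have "inj_on f AC" by (metis inj_onI less_irrefl)
  then show ?thesis using f \<open>finite RA\<close> by (intro card_inj_on_le) auto
qed

theorem mainTheorem6:
  fixes Spc :: "'s set" and Rxn :: "'r set"
    and Sin Sout :: "'s \<Rightarrow> 'r \<Rightarrow> nat"
    and AC :: "'s set" and RA :: "'r set"
  assumes "finite Spc" and "finite Rxn"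
    and "autocatalytic_core Spc Rxn Sin Sout AC RA"
  shows "card AC = card RA \<and>
    (\<exists>B. is_inverse_on AC RA (stoich Sin Sout) B) \<and>
    (\<forall>B. is_inverse_on AC RA (stoich Sin Sout) B \<longrightarrow>
       (\<forall>s\<in>AC. (\<forall>r\<in>RA. B r s \<ge> 0) \<and> (\<exists>r\<in>RA. B r s \<noteq> 0)))"
proof -
  note core = assms(3)
  from core obtain "AC \<subseteq> Spc" "RA \<subseteq> Rxn" by (rule autocatalytic_coreE)
  with assms(1,2) have "finite AC" "finite RA" by (simp_all add: finite_subset)
  have invertible: "card AC = card RA \<and> (\<exists>B. is_inverse_on AC RA (stoich Sin Sout) B)"
    by (rule is_inverse_on_exists_if_trivial_kernel[OF \<open>finite AC\<close> \<open>finite RA\<close>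
          core_card_species_le_reactions[OF core \<open>finite RA\<close>]
          core_stoich_kernel_trivial[OF core \<open>finite RA\<close>]])
  have "(\<forall>r\<in>RA. 0 \<le> B r s) \<and> (\<exists>r\<in>RA. B r s \<noteq> 0)"
    if "is_inverse_on AC RA (stoich Sin Sout) B" "s \<in> AC" for B s
  proof -
    have column: "\<forall>s'\<in>AC. (\<Sum>r\<in>RA. stoich Sin Sout s' r * B r s) = (if s' = s then 1 else 0)"
      using that unfolding is_inverse_on_def by blast
    then have "\<forall>r\<in>RA. 0 \<le> B r s"
      by (intro core_stoich_nonneg_imp_nonneg[OF core \<open>finite RA\<close>]) simp
    moreover have "\<exists>r\<in>RA. B r s \<noteq> 0"
    proof (rule ccontr)
      assume "\<not> (\<exists>r\<in>RA. B r s \<noteq> 0)"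
      then have "(\<Sum>r\<in>RA. stoich Sin Sout s r * B r s) = 0" by simp
      then show False using column \<open>s \<in> AC\<close> by simp
    qed
    ultimately show ?thesis ..
  qed
  then show ?thesis using invertible by blast
qed

end
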